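(* Let $H$ be a Hilbert space and $U_{ik}\in B(H)$, $i,k=1,\dots,n$, operators satisfying relations (R1)–(R5). Then the matrix $U=(U_{kl})\in M_n(B(H))$ is unitary, i.e. $U^*U=1=UU^*$ in $M_n(B(H))$.
   Context: $n\ge2$, $\theta\in M_n(\mathbb R)$ skew-symmetric, $\omega_{ij}=e^{2\pi i\theta_{ij}}$. Relations, for all $i,j,k,l\in\{1,\dots,n\}$: (R1) $U_{ik}U_{jl}+\omega_{ji}U_{jk}U_{il}=\omega_{kl}U_{il}U_{jk}+\omega_{ji}\omega_{kl}U_{jl}U_{ik}$; (R2) $\sum_iU_{ik}U_{il}^*=\delta_{kl}1$; (R3) $\sum_iU_{il}^*U_{ik}=\delta_{kl}1$; (R4) $U_{jk}U_{ik}^*=0$ for $i\neq j$; (R5) $U_{ik}^*U_{jk}=0$ for $i\neq j$. *)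

theory Defs
  imports "HOL-Analysis.Analysis"
begin

text \<open>Complex inner product spaces and complex Hilbert spaces (not in the distribution).
  Convention: the inner product is conjugate-linear in the first and linear in the second argument.\<close>

class complex_inner = real_normed_vector +
  fixes scaleC :: "complex \<Rightarrow> 'a \<Rightarrow> 'a" (infixr \<open>*\<^sub>C\<close> 75)
    and cinner :: "'a \<Rightarrow> 'a \<Rightarrow> complex"
  assumes scaleC_add_right: "a *\<^sub>C (x + y) = a *\<^sub>C x + a *\<^sub>C y"
    and scaleC_add_left: "(a + b) *\<^sub>C x = a *\<^sub>C x + b *\<^sub>C x"
    and scaleC_scaleC: "a *\<^sub>C (b *\<^sub>C x) = (a * b) *\<^sub>C x"
    and scaleC_one: "1 *\<^sub>C x = x"
    and scaleR_scaleC: "scaleR r x = complex_of_real r *\<^sub>C x"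
    and cinner_commute: "cinner x y = cnj (cinner y x)"
    and cinner_add_right: "cinner x (y + z) = cinner x y + cinner x z"
    and cinner_scaleC_right: "cinner x (a *\<^sub>C y) = a * cinner x y"
    and cinner_self_real: "Im (cinner x x) = 0"
    and cinner_self_nonneg: "0 \<le> Re (cinner x x)"
    and cinner_self_eq_zero: "cinner x x = 0 \<longleftrightarrow> x = 0"
    and norm_eq_sqrt_cinner: "norm x = sqrt (Re (cinner x x))"

class chilbert_space = complex_inner + complete_space

definition bounded_clinear :: "('a::complex_inner \<Rightarrow> 'b::complex_inner) \<Rightarrow> bool" where
  "bounded_clinear T \<longleftrightarrow> bounded_linear T \<and> (\<forall>c x. T (c *\<^sub>C x) = c *\<^sub>C T x)"

definition adj :: "('a::complex_inner \<Rightarrow> 'a) \<Rightarrow> ('a \<Rightarrow> 'a)" where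
  "adj T = (THE S. \<forall>x y. cinner (S x) y = cinner x (T y))"

end

theory Submission
  imports Defs
begin

text \<open>Only the relations (R2) on the diagonal, (R3) and (R4) are needed.
  (R3) says that \<open>U\<close> is an isometry of \<open>H\<^sup>n\<close>, and (R4) kills the off-diagonal entries of \<open>U U\<^sup>*\<close>.
  For the diagonal entries fix \<open>x\<close>, put \<open>z\<^sub>j\<^sub>k = U\<^sub>j\<^sub>k\<^sup>* x\<close> and \<open>S\<^sub>j = \<Sum>\<^sub>k \<parallel>z\<^sub>j\<^sub>k\<parallel>\<^sup>2\<close>.
  Applying the isometry to the vector \<open>z\<^sub>j\<close> gives a vector \<open>w\<close> with \<open>\<parallel>w\<parallel>\<^sup>2 = S\<^sub>j\<close> whose \<open>j\<close>-th
  component is \<open>w\<^sub>j = \<Sum>\<^sub>k U\<^sub>j\<^sub>k U\<^sub>j\<^sub>k\<^sup>* x\<close>, and \<open>\<langle>x, w\<^sub>j\<rangle> = S\<^sub>j\<close>; hence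
  \<open>\<parallel>x - w\<^sub>j\<parallel>\<^sup>2 \<le> \<parallel>x\<parallel>\<^sup>2 - S\<^sub>j\<close>. The diagonal of (R2) gives \<open>\<Sum>\<^sub>j S\<^sub>j = n \<parallel>x\<parallel>\<^sup>2\<close>, so summing over \<open>j\<close>
  forces \<open>w\<^sub>j = x\<close> for every \<open>j\<close>. The adjoint is defined by a description, so its defining
  property needs the Riesz representation theorem, which comes from the minimal-norm element of
  the closed affine hyperplane \<open>f = 1\<close>.\<close>

lemma cinner_add_left: "cinner (x + y) z = cinner x z + cinner (y::'a::complex_inner) z"
  by (metis cinner_commute cinner_add_right complex_cnj_add)

lemma cinner_scaleC_left: "cinner (a *\<^sub>C x) (y::'a::complex_inner) = cnj a * cinner x y"
  by (metis cinner_commute cinner_scaleC_right complex_cnj_mult)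

lemma cinner_zero_right [simp]: "cinner (x::'a::complex_inner) 0 = 0"
  using cinner_add_right[of x 0 0] by simp

lemma cinner_zero_left [simp]: "cinner 0 (x::'a::complex_inner) = 0"
  using cinner_add_left[of 0 0 x] by simp

lemma scaleC_minus_one: "(-1) *\<^sub>C x = - (x::'a::complex_inner)"
  using scaleR_scaleC[of "-1" x] by simp

lemma cinner_minus_right: "cinner x (- y) = - cinner x (y::'a::complex_inner)"
  by (metis scaleC_minus_one cinner_scaleC_right mult_minus1)

lemma cinner_minus_left: "cinner (- x) y = - cinner x (y::'a::complex_inner)"
  by (metis cinner_commute cinner_minus_right complex_cnj_minus)

lemma cinner_diff_right: "cinner x (y - z) = cinner x y - cinner x (z::'a::complex_inner)"
  unfolding diff_conv_add_uminus cinner_add_right cinner_minus_right by simp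

lemma cinner_diff_left: "cinner (x - y) z = cinner x z - cinner y (z::'a::complex_inner)"
  unfolding diff_conv_add_uminus cinner_add_left cinner_minus_left by simp

lemma cinner_sum_right: "cinner x (sum f A) = (\<Sum>i\<in>A. cinner (x::'a::complex_inner) (f i))"
  by (induct A rule: infinite_finite_induct) (simp_all add: cinner_add_right)

lemma cinner_sum_left: "cinner (sum f A) x = (\<Sum>i\<in>A. cinner (f i) (x::'a::complex_inner))"
  by (induct A rule: infinite_finite_induct) (simp_all add: cinner_add_left)

lemma cinner_self_eq_power2_norm: "cinner x x = complex_of_real (norm (x::'a::complex_inner) ^ 2)"
  using cinner_self_real[of x] cinner_self_nonneg[of x] norm_eq_sqrt_cinner[of x]
  by (simp add: complex_eq_iff)

lemma power2_norm_eq_Re_cinner: "norm (x::'a::complex_inner) ^ 2 = Re (cinner x x)"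
  by (simp add: cinner_self_eq_power2_norm)

lemma power2_norm_add_scaleC:
  "norm (v + c *\<^sub>C y) ^ 2
   = norm v ^ 2 + (cmod c)^2 * norm (y::'a::complex_inner) ^ 2 + 2 * Re (c * cinner v y)"
proof -
  have expand: "cinner (v + c *\<^sub>C y) (v + c *\<^sub>C y)
     = cinner v v + c * cinner v y + cnj c * cnj (cinner v y) + cnj c * (c * cinner y y)"
    unfolding cinner_add_left cinner_add_right cinner_scaleC_left cinner_scaleC_right
    by (simp add: algebra_simps cinner_commute[of y v])
  have "cnj c * c = complex_of_real ((cmod c)^2)"
    by (simp add: complex_mult_cnj cmod_power2 mult.commute[of "cnj c"])
  then have "cnj c * (c * cinner y y) = complex_of_real ((cmod c)^2 * norm y^2)"
    by (simp add: cinner_self_eq_power2_norm mult.assoc[symmetric])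
  with expand show ?thesis
    by (simp add: power2_norm_eq_Re_cinner)
qed

lemma power2_norm_add:
  "norm (a + b)^2 = norm a^2 + norm b^2 + 2 * Re (cinner a (b::'a::complex_inner))"
  using power2_norm_add_scaleC[of a 1 b] by (simp add: scaleC_one)

lemma power2_norm_diff:
  "norm (a - b)^2 = norm a^2 + norm b^2 - 2 * Re (cinner a (b::'a::complex_inner))"
  using power2_norm_add_scaleC[of a "-1" b] by (simp add: scaleC_minus_one)

lemma parallelogram_law:
  "norm (a + b) ^ 2 + norm (a - b) ^ 2 = 2 * norm a ^ 2 + 2 * norm (b::'a::complex_inner) ^ 2"
  using power2_norm_add[of a b] power2_norm_diff[of a b] by linarith

lemma norm_cinner_le: "cmod (cinner v y) \<le> norm v * norm (y::'a::complex_inner)"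
proof (cases "v = 0")
  case True then show ?thesis by simp
next
  case False
  define r where "r = norm v ^ 2"
  have r: "r > 0" using False by (simp add: r_def)
  define a where "a = cinner v y"
  \<comment> \<open>expand \<open>0 \<le> \<parallel>y - (\<langle>v,y\<rangle>/\<parallel>v\<parallel>\<^sup>2) v\<parallel>\<^sup>2\<close>\<close>
  define c where "c = - a / complex_of_real r"
  have "c * cnj a = - (a * cnj a) / complex_of_real r" by (simp add: c_def)
  also have "a * cnj a = complex_of_real ((cmod a)^2)" by (simp add: complex_mult_cnj cmod_power2)
  finally have Re_c_cnj_a: "Re (c * cnj a) = - ((cmod a)^2 / r)" by simp
  have cmod_c: "(cmod c)^2 * r = (cmod a)^2 / r"
    using r by (simp add: c_def norm_divide power_divide power2_eq_square)
  have "0 \<le> norm (y + c *\<^sub>C v) ^ 2" by simp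
  also have "\<dots> = norm y ^ 2 + (cmod c)^2 * r + 2 * Re (c * cnj a)"
    by (simp add: power2_norm_add_scaleC r_def a_def cinner_commute[of y v])
  finally have "(cmod a)^2 / r \<le> norm y ^ 2" unfolding cmod_c Re_c_cnj_a by simp
  then have "(cmod a)^2 \<le> (norm v * norm y)^2"
    using r by (simp add: divide_le_eq r_def power_mult_distrib mult.commute)
  then show ?thesis unfolding a_def by (rule power2_le_imp_le) simp
qed

lemma bounded_linear_cinner_right: "bounded_linear (\<lambda>y. cinner (v::'a::complex_inner) y)"
proof (rule bounded_linear_intro[where K = "norm v"])
  show "cinner v (x + y) = cinner v x + cinner v y" for x y by (rule cinner_add_right)
  show "cinner v (r *\<^sub>R x) = r *\<^sub>R cinner v x" for r x
    by (simp add: scaleR_scaleC cinner_scaleC_right scaleR_conv_of_real)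
  show "norm (cinner v x) \<le> norm x * norm v" for x
    using norm_cinner_le[of v x] by (simp add: mult.commute)
qed

lemma Cauchy_minimizing_sequence:
  fixes s :: "nat \<Rightarrow> 'a::complex_inner"
  assumes mid: "\<And>a b. a \<in> C \<Longrightarrow> b \<in> C \<Longrightarrow> (1/2::real) *\<^sub>R (a + b) \<in> C"
    and low: "\<And>c. c \<in> C \<Longrightarrow> d \<le> norm c" and d0: "0 \<le> d"
    and s: "\<And>n. s n \<in> C" "\<And>n. norm (s n) ^ 2 < d ^ 2 + inverse (real (Suc n))"
  shows "Cauchy s"
proof (rule CauchyI)
  have diff: "norm (s m - s n) ^ 2 \<le> 2 * inverse (real (Suc m)) + 2 * inverse (real (Suc n))"
    for m n
  proof -
    have "d \<le> norm ((1/2::real) *\<^sub>R (s m + s n))" using low mid s(1) by blast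
    then have "d ^ 2 \<le> (norm (s m + s n) / 2) ^ 2" using d0 by (simp add: power_mono)
    then have "4 * d ^ 2 \<le> norm (s m + s n) ^ 2" by (simp add: power_divide)
    with parallelogram_law[of "s m" "s n"] s(2)[of m] s(2)[of n] show ?thesis by linarith
  qed
  fix e :: real assume e: "0 < e"
  obtain M :: nat where M: "4 / e^2 < real M" using reals_Archimedean2 by blast
  then have M_pos: "real M > 0" using e by (smt (verit) divide_pos_pos zero_less_power)
  have "4 * inverse (real M) < e^2"
    using M M_pos e by (simp add: field_simps)
  moreover have inv_le: "inverse (real (Suc m)) \<le> inverse (real M)" if "M \<le> m" for m
    using that M_pos by (simp add: le_imp_inverse_le)
  ultimately have "norm (s m - s n) ^ 2 < e ^ 2" if "M \<le> m" "M \<le> n" for m n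
    using diff[of m n] inv_le[OF that(1)] inv_le[OF that(2)] by linarith
  then have "\<forall>m\<ge>M. \<forall>n\<ge>M. norm (s m - s n) < e"
    using e by (meson less_le power_less_imp_less_base)
  then show "\<exists>M. \<forall>m\<ge>M. \<forall>n\<ge>M. norm (s m - s n) < e" by blast
qed

lemma closed_midpoint_convex_has_min_norm:
  fixes C :: "'a::chilbert_space set"
  assumes cl: "closed C" and ne: "C \<noteq> {}"
    and mid: "\<And>a b. a \<in> C \<Longrightarrow> b \<in> C \<Longrightarrow> (1/2::real) *\<^sub>R (a + b) \<in> C"
  shows "\<exists>z\<in>C. \<forall>c\<in>C. norm z \<le> norm c"
proof -
  define d where "d = Inf (norm ` C)"
  have bdd: "bdd_below (norm ` C)" by (rule bdd_belowI[of _ 0]) auto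
  have low: "d \<le> norm c" if "c \<in> C" for c
    unfolding d_def using bdd that by (simp add: cInf_lower)
  have d0: "0 \<le> d" unfolding d_def using ne by (auto intro: cInf_greatest)
  have "\<exists>c. c \<in> C \<and> norm c ^ 2 < d ^ 2 + inverse (real (Suc n))" for n
  proof -
    have "d = sqrt (d ^ 2)" using d0 by simp
    also have "\<dots> < sqrt (d ^ 2 + inverse (real (Suc n)))"
      by (rule real_sqrt_less_mono) simp
    finally obtain c where "c \<in> C" and c: "norm c < sqrt (d ^ 2 + inverse (real (Suc n)))"
      using cInf_lessD[of "norm ` C"] ne unfolding d_def by auto
    moreover from c have "norm c ^ 2 < (sqrt (d ^ 2 + inverse (real (Suc n)))) ^ 2"
      by (intro power_strict_mono) auto
    ultimately show ?thesis by auto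
  qed
  then obtain s where s: "\<And>n. s n \<in> C" "\<And>n. norm (s n) ^ 2 < d ^ 2 + inverse (real (Suc n))"
    by metis
  have "Cauchy s" using Cauchy_minimizing_sequence[OF mid low d0 s] by blast
  then obtain z where z: "s \<longlonglongrightarrow> z" using Cauchy_convergent_iff convergent_def by blast
  have zC: "z \<in> C" using closed_sequentially[OF cl s(1) z] .
  have "norm z ^ 2 \<le> d ^ 2"
  proof (rule LIMSEQ_le)
    show "(\<lambda>n. norm (s n) ^ 2) \<longlonglongrightarrow> norm z ^ 2" by (intro tendsto_intros z)
    show "(\<lambda>n. d ^ 2 + inverse (real (Suc n))) \<longlonglongrightarrow> d ^ 2"
      using tendsto_add[OF tendsto_const LIMSEQ_inverse_real_of_nat, of "d^2"] by simp
    show "\<exists>N. \<forall>n\<ge>N. norm (s n) ^ 2 \<le> d ^ 2 + inverse (real (Suc n))"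
      using s(2) less_imp_le by blast
  qed
  then have "norm z \<le> d" using d0 by (rule power2_le_imp_le)
  then show ?thesis using zC low by force
qed

lemma riesz_representation:
  fixes f :: "'a::chilbert_space \<Rightarrow> complex"
  assumes add: "\<And>x y. f (x + y) = f x + f y" and scale: "\<And>c x. f (c *\<^sub>C x) = c * f x"
    and cont: "continuous_on UNIV f"
  shows "\<exists>v. \<forall>y. cinner v y = f y"
proof (cases "\<forall>y. f y = 0")
  case True then show ?thesis by (intro exI[of _ 0]) simp
next
  case False
  then obtain y0 where y0: "f y0 \<noteq> 0" by blast
  have f_diff: "f (x - y) = f x - f y" for x y
    using add[of x "(-1) *\<^sub>C y"] scale[of "-1" y] by (simp add: scaleC_minus_one)
  \<comment> \<open>the minimal-norm element of the affine hyperplane \<open>f = 1\<close> is orthogonal to \<open>ker f\<close>\<close>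
  define C where "C = {y. f y = 1}"
  have "closed C" unfolding C_def by (rule closed_Collect_eq[OF cont continuous_on_const])
  moreover have "(1 / f y0) *\<^sub>C y0 \<in> C" using y0 by (simp add: C_def scale)
  moreover have "(1/2::real) *\<^sub>R (a + b) \<in> C" if "a \<in> C" "b \<in> C" for a b
    using that unfolding C_def by (simp add: scaleR_scaleC scale add)
  ultimately obtain z where "z \<in> C" and z_min: "\<And>c. c \<in> C \<Longrightarrow> norm z \<le> norm c"
    using closed_midpoint_convex_has_min_norm[of C] by blast
  then have fz: "f z = 1" by (simp add: C_def)
  have orth: "cinner z k = 0" if fk: "f k = 0" for k
  proof -
    define a where "a = cinner z k"
    define s where "s = 1 / (norm k ^ 2 + 1)"
    have k_pos: "0 < norm k ^ 2 + 1" by (simp add: add_nonneg_pos)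
    have s0: "s > 0" using k_pos by (simp add: s_def)
    have sk: "s * norm k ^ 2 < 1" using k_pos by (simp add: s_def field_simps)
    define t where "t = - complex_of_real s * cnj a"
    have "z + t *\<^sub>C k \<in> C" unfolding C_def by (simp add: add scale fk fz)
    then have "norm z \<le> norm (z + t *\<^sub>C k)" by (rule z_min)
    then have "norm z ^ 2 \<le> norm (z + t *\<^sub>C k) ^ 2" by (simp add: power_mono)
    also have "\<dots> = norm z ^ 2 + (cmod t)^2 * norm k ^ 2 + 2 * Re (t * a)"
      unfolding a_def by (rule power2_norm_add_scaleC)
    finally have ineq: "0 \<le> (cmod t)^2 * norm k ^ 2 + 2 * Re (t * a)" by simp
    have cmod_t: "(cmod t)^2 = s^2 * (cmod a)^2"
      using s0 by (simp add: t_def norm_mult power_mult_distrib)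
    have "cnj a * a = complex_of_real ((cmod a)^2)"
      by (simp add: complex_mult_cnj cmod_power2 mult.commute[of "cnj a"])
    then have "t * a = - complex_of_real (s * (cmod a)^2)" by (simp add: t_def mult.assoc)
    then have "Re (t * a) = - (s * (cmod a)^2)" by simp
    with ineq cmod_t have "0 \<le> s * ((cmod a)^2 * (s * norm k ^ 2 - 2))"
      by (simp add: algebra_simps power2_eq_square)
    then have "0 \<le> (cmod a)^2 * (s * norm k ^ 2 - 2)" using s0 by (simp add: zero_le_mult_iff)
    moreover have "s * norm k ^ 2 - 2 < 0" using sk by simp
    ultimately have "(cmod a)^2 \<le> 0" by (simp add: zero_le_mult_iff)
    then show ?thesis unfolding a_def by simp
  qed
  define r where "r = norm z ^ 2"
  have r0: "r > 0" using fz f_diff[of 0 0] by (auto simp: r_def)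
  have "cinner ((1 / complex_of_real r) *\<^sub>C z) y = f y" for y
  proof -
    have "cinner z (y - f y *\<^sub>C z) = 0" by (rule orth) (simp add: f_diff scale fz)
    then have "cinner z y = f y * complex_of_real r"
      by (simp add: cinner_diff_right cinner_scaleC_right cinner_self_eq_power2_norm r_def)
    then show ?thesis using r0 by (simp add: cinner_scaleC_left)
  qed
  then show ?thesis by blast
qed

lemma cinner_adj_left:
  fixes T :: "'a::chilbert_space \<Rightarrow> 'a"
  assumes T: "bounded_clinear T"
  shows "cinner (adj T x) y = cinner x (T y)"
proof -
  have lin: "bounded_linear T" and hom: "\<And>c x. T (c *\<^sub>C x) = c *\<^sub>C T x"
    using T unfolding bounded_clinear_def by auto
  have "\<exists>v. \<forall>y. cinner v y = cinner x (T y)" for x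
  proof (rule riesz_representation)
    show "cinner x (T (a + b)) = cinner x (T a) + cinner x (T b)" for a b
      by (simp add: linear_add[OF bounded_linear.linear[OF lin]] cinner_add_right)
    show "cinner x (T (c *\<^sub>C a)) = c * cinner x (T a)" for c a
      by (simp add: hom cinner_scaleC_right)
    show "continuous_on UNIV (\<lambda>y. cinner x (T y))"
      using linear_continuous_on[OF bounded_linear_compose[OF bounded_linear_cinner_right lin]]
      by simp
  qed
  then obtain S where S: "\<And>x y. cinner (S x) y = cinner x (T y)" by metis
  have "adj T = S" unfolding adj_def
  proof (rule the_equality)
    show "\<forall>x y. cinner (S x) y = cinner x (T y)" using S by blast
    fix S' assume S': "\<forall>x y. cinner (S' x) y = cinner x (T y)"
    show "S' = S"
    proof
      fix x
      have "cinner (S' x - S x) (S' x - S x) = 0" by (simp add: cinner_diff_left S'[rule_format] S)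
      then show "S' x = S x" by (simp add: cinner_self_eq_zero)
    qed
  qed
  then show ?thesis by (simp add: S)
qed

lemma cinner_adj_right:
  fixes T :: "'a::chilbert_space \<Rightarrow> 'a"
  assumes "bounded_clinear T"
  shows "cinner (T x) y = cinner x (adj T y)"
  by (metis assms cinner_adj_left cinner_commute)

lemma sum_power2_norm_isometry:
  fixes U :: "'i \<Rightarrow> 'i \<Rightarrow> 'h::chilbert_space \<Rightarrow> 'h"
  assumes fin: "finite I"
    and bdd: "\<And>i k. i \<in> I \<Longrightarrow> k \<in> I \<Longrightarrow> bounded_clinear (U i k)"
    and iso: "\<And>k l y. k \<in> I \<Longrightarrow> l \<in> I \<Longrightarrow> (\<Sum>i\<in>I. adj (U i l) (U i k y)) = (if k = l then y else 0)"
  shows "(\<Sum>i\<in>I. norm (\<Sum>k\<in>I. U i k (v k)) ^ 2) = (\<Sum>k\<in>I. norm (v k) ^ 2)"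
proof -
  have "(\<Sum>i\<in>I. cinner (\<Sum>k\<in>I. U i k (v k)) (\<Sum>k\<in>I. U i k (v k)))
      = (\<Sum>i\<in>I. \<Sum>k\<in>I. \<Sum>l\<in>I. cinner (U i k (v k)) (U i l (v l)))"
    unfolding cinner_sum_left cinner_sum_right by (intro sum.cong refl sum.swap)
  also have "\<dots> = (\<Sum>i\<in>I. \<Sum>k\<in>I. \<Sum>l\<in>I. cinner (v k) (adj (U i k) (U i l (v l))))"
    by (intro sum.cong refl) (simp add: cinner_adj_right bdd)
  also have "\<dots> = (\<Sum>k\<in>I. \<Sum>l\<in>I. cinner (v k) (\<Sum>i\<in>I. adj (U i k) (U i l (v l))))"
    unfolding cinner_sum_right
    by (rule trans[OF sum.swap]) (intro sum.cong refl sum.swap)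
  also have "\<dots> = (\<Sum>k\<in>I. \<Sum>l\<in>I. if k = l then cinner (v k) (v l) else 0)"
    by (intro sum.cong refl) (simp add: iso)
  also have "\<dots> = (\<Sum>k\<in>I. cinner (v k) (v k))"
    by (simp add: fin)
  finally show ?thesis
    by (simp add: power2_norm_eq_Re_cinner flip: Re_sum)
qed

lemma sum_power2_norm_adj:
  fixes U :: "'i \<Rightarrow> 'i \<Rightarrow> 'h::chilbert_space \<Rightarrow> 'h"
  assumes bdd: "\<And>i k. i \<in> I \<Longrightarrow> k \<in> I \<Longrightarrow> bounded_clinear (U i k)"
    and col: "\<And>k x. k \<in> I \<Longrightarrow> (\<Sum>j\<in>I. U j k (adj (U j k) x)) = x"
  shows "(\<Sum>j\<in>I. \<Sum>k\<in>I. norm (adj (U j k) x) ^ 2) = real (card I) * norm x ^ 2"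
proof -
  have "(\<Sum>j\<in>I. norm (adj (U j k) x) ^ 2) = norm x ^ 2" if k: "k \<in> I" for k
  proof -
    have "(\<Sum>j\<in>I. cinner (adj (U j k) x) (adj (U j k) x)) = cinner x (\<Sum>j\<in>I. U j k (adj (U j k) x))"
      unfolding cinner_sum_right by (intro sum.cong refl) (simp add: cinner_adj_left bdd k)
    then show ?thesis
      by (simp add: col k power2_norm_eq_Re_cinner flip: Re_sum)
  qed
  then show ?thesis by (subst sum.swap) simp
qed

lemma sum_adj_row_eq_id:
  fixes U :: "'i \<Rightarrow> 'i \<Rightarrow> 'h::chilbert_space \<Rightarrow> 'h"
  assumes fin: "finite I"
    and bdd: "\<And>i k. i \<in> I \<Longrightarrow> k \<in> I \<Longrightarrow> bounded_clinear (U i k)"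
    and iso: "\<And>k l y. k \<in> I \<Longrightarrow> l \<in> I \<Longrightarrow> (\<Sum>i\<in>I. adj (U i l) (U i k y)) = (if k = l then y else 0)"
    and col: "\<And>k x. k \<in> I \<Longrightarrow> (\<Sum>j\<in>I. U j k (adj (U j k) x)) = x"
    and j: "j \<in> I"
  shows "(\<Sum>k\<in>I. U j k (adj (U j k) x)) = x"
proof -
  define S where "S j = (\<Sum>k\<in>I. norm (adj (U j k) x) ^ 2)" for j
  define w where "w i j = (\<Sum>k\<in>I. U i k (adj (U j k) x))" for i j
  have defect: "norm (x - w j j) ^ 2 \<le> norm x ^ 2 - S j" if j: "j \<in> I" for j
  proof -
    have "norm (w j j) ^ 2 \<le> (\<Sum>i\<in>I. norm (w i j) ^ 2)"
      by (rule member_le_sum[OF j]) (simp_all add: fin)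
    also have "\<dots> = S j"
      unfolding w_def S_def by (rule sum_power2_norm_isometry[OF fin bdd iso])
    finally have "norm (w j j) ^ 2 \<le> S j" .
    moreover have "cinner x (w j j) = (\<Sum>k\<in>I. cinner (adj (U j k) x) (adj (U j k) x))"
      unfolding w_def cinner_sum_right by (intro sum.cong refl) (simp add: cinner_adj_left bdd j)
    then have "Re (cinner x (w j j)) = S j"
      by (simp add: S_def power2_norm_eq_Re_cinner)
    ultimately show ?thesis
      using power2_norm_diff[of x "w j j"] by linarith
  qed
  have "(\<Sum>i\<in>I. norm (x - w i i) ^ 2) \<le> (\<Sum>i\<in>I. norm x ^ 2 - S i)"
    by (rule sum_mono) (rule defect)
  also have "\<dots> = 0"
    using sum_power2_norm_adj[OF bdd col, where x = x] by (simp add: S_def sum_subtractf)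
  finally have "(\<Sum>i\<in>I. norm (x - w i i) ^ 2) = 0"
    by (simp add: antisym sum_nonneg)
  then have "norm (x - w j j) ^ 2 = 0"
    using fin j by (simp add: sum_nonneg_eq_0_iff)
  then show ?thesis by (simp add: w_def)
qed

theorem proposition3p9:
  fixes n :: nat
    and \<theta> :: "nat \<Rightarrow> nat \<Rightarrow> real"
    and \<omega> :: "nat \<Rightarrow> nat \<Rightarrow> complex"
    and U :: "nat \<Rightarrow> nat \<Rightarrow> ('h::chilbert_space \<Rightarrow> 'h)"
  assumes n2: "n \<ge> 2"
    and skew: "\<forall>i\<in>{1..n}. \<forall>j\<in>{1..n}. \<theta> i j = - \<theta> j i"
    and omega: "\<forall>i\<in>{1..n}. \<forall>j\<in>{1..n}. \<omega> i j = exp (2 * complex_of_real pi * \<i> * complex_of_real (\<theta> i j))"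
    and bdd: "\<forall>i\<in>{1..n}. \<forall>k\<in>{1..n}. bounded_clinear (U i k)"
    and R1: "\<forall>i\<in>{1..n}. \<forall>j\<in>{1..n}. \<forall>k\<in>{1..n}. \<forall>l\<in>{1..n}. \<forall>x.
              U i k (U j l x) + \<omega> j i *\<^sub>C U j k (U i l x)
            = \<omega> k l *\<^sub>C U i l (U j k x) + (\<omega> j i * \<omega> k l) *\<^sub>C U j l (U i k x)"
    and R2: "\<forall>k\<in>{1..n}. \<forall>l\<in>{1..n}. \<forall>x.
              (\<Sum>i=1..n. U i k (adj (U i l) x)) = (if k = l then x else 0)"
    and R3: "\<forall>k\<in>{1..n}. \<forall>l\<in>{1..n}. \<forall>x.
              (\<Sum>i=1..n. adj (U i l) (U i k x)) = (if k = l then x else 0)"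
    and R4: "\<forall>i\<in>{1..n}. \<forall>j\<in>{1..n}. \<forall>k\<in>{1..n}. i \<noteq> j \<longrightarrow> (\<forall>x. U j k (adj (U i k) x) = 0)"
    and R5: "\<forall>i\<in>{1..n}. \<forall>j\<in>{1..n}. \<forall>k\<in>{1..n}. i \<noteq> j \<longrightarrow> (\<forall>x. adj (U i k) (U j k x) = 0)"
  shows "(\<forall>k\<in>{1..n}. \<forall>l\<in>{1..n}. \<forall>x.
            (\<Sum>i=1..n. adj (U i k) (U i l x)) = (if k = l then x else 0))
       \<and> (\<forall>k\<in>{1..n}. \<forall>l\<in>{1..n}. \<forall>x.
            (\<Sum>i=1..n. U k i (adj (U l i) x)) = (if k = l then x else 0))"
proof -
  let ?I = "{1..n}"
  have bdd': "\<And>i k. i \<in> ?I \<Longrightarrow> k \<in> ?I \<Longrightarrow> bounded_clinear (U i k)"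
    using bdd by blast
  have iso: "\<And>k l y. k \<in> ?I \<Longrightarrow> l \<in> ?I \<Longrightarrow> (\<Sum>i\<in>?I. adj (U i l) (U i k y)) = (if k = l then y else 0)"
    using R3 by simp
  have col: "\<And>k x. k \<in> ?I \<Longrightarrow> (\<Sum>j\<in>?I. U j k (adj (U j k) x)) = x"
    using R2 by simp
  have "(\<Sum>i=1..n. adj (U i k) (U i l x)) = (if k = l then x else 0)"
    if "k \<in> ?I" "l \<in> ?I" for k l x
    using iso[OF that(2,1), of x] by (cases "k = l") auto
  moreover have "(\<Sum>i=1..n. U k i (adj (U l i) x)) = (if k = l then x else 0)"
    if "k \<in> ?I" "l \<in> ?I" for k l x
  proof (cases "k = l")
    case True
    then show ?thesis using sum_adj_row_eq_id[OF finite_atLeastAtMost bdd' iso col] that by simp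
  next
    case False
    then show ?thesis using R4 that by simp
  qed
  ultimately show ?thesis by blast
qed

end
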